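(* Let $m \ge 1$ and let $S_1 \neq S_2$ be finite nonempty multisets of vectors in $\mathbb{R}^m$ with $|S_1| = |S_2|$. For $p \in (0,1)$ and $i \in \{1,2\}$, let $M_i^{(p)}$ be the random vector obtained by retaining each element of $S_i$ independently with probability $1-p$ (dropping it with probability $p$) and taking the mean of the retained elements (with the convention that the mean of an empty multiset is $0$). Then there exists $p \in (0,1)$ such that $M_1^{(p)}$ and $M_2^{(p)}$ have different distributions; that is, $S_1$ and $S_2$ can be distinguished by a DropGNN with mean neighborhood aggregation.
   Context: In a DropGNN with mean neighborhood aggregation, a node $u$ whose neighbors have the multiset of feature vectors $S$ computes, in each run, the mean of the features of those neighbors that were not dropped; each node is dropped independently with probability $p$ in each run, and the results of many independent runs are aggregated. Two neighbor multisets are distinguishable if the resulting distributions of aggregated values differ. *)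

theory Defs
  imports "HOL-Analysis.Analysis" "HOL-Probability.Probability" "HOL-Library.Multiset"
begin

definition ms_mean :: "('a::real_vector) multiset \<Rightarrow> 'a" where
  "ms_mean M = (if M = {#} then 0 else (1 / real (size M)) *\<^sub>R sum_mset M)"

definition retain_pmf_list :: "real \<Rightarrow> 'a list \<Rightarrow> 'a multiset pmf" where
  "retain_pmf_list p xs =
     map_pmf (\<lambda>b. mset (map (\<lambda>i. xs ! i) (filter b [0..<length xs])))
       (Pi_pmf {..<length xs} False (\<lambda>_. bernoulli_pmf (1 - p)))"

text \<open>For a multiset S, enumerate its elements by some list (the resulting distribution does not
  depend on the enumeration).\<close>
definition retain_pmf :: "real \<Rightarrow> 'a multiset \<Rightarrow> 'a multiset pmf" where
  "retain_pmf p S = retain_pmf_list p (SOME xs. mset xs = S)"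

definition drop_mean_pmf :: "real \<Rightarrow> ('a::real_vector) multiset \<Rightarrow> 'a pmf" where
  "drop_mean_pmf p S = map_pmf ms_mean (retain_pmf p S)"

end

theory Submission
  imports Defs
begin

text \<open>
  For v \<noteq> 0 the event that the retained mean equals v forces at least one element to be
  retained, so its probability is (1 - p) times a polynomial in p. At p = 1 only the selections
  of exactly one element survive in that polynomial, so its value there is the multiplicity of v
  in the multiset. Two different multisets of equal size differ in the multiplicity of some
  v \<noteq> 0, and by continuity the two polynomials then differ at some p < 1 close to 1.
\<close>

lemma multiset_eqI_size_count_except:
  assumes "size M = size N" and "\<And>x. x \<noteq> a \<Longrightarrow> count M x = count N x"
  shows "M = N"
proof -
  have split_size: "size K = size (filter_mset (\<lambda>x. x \<noteq> a) K) + count K a" for K :: "'a multiset"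
    by (metis add.commute filter_eq_replicate_mset multiset_partition size_replicate_mset size_union)
  have "filter_mset (\<lambda>x. x \<noteq> a) M = filter_mset (\<lambda>x. x \<noteq> a) N"
    by (rule multiset_eqI) (simp add: assms(2))
  then have "count M a = count N a"
    using split_size[of M] split_size[of N] assms(1) by simp
  then show ?thesis
    using assms(2) by (metis multiset_eqI)
qed

lemma exists_left_of_neq_continuous:
  fixes f g :: "real \<Rightarrow> 'a::real_normed_vector"
  assumes "isCont f a" "isCont g a" "f a \<noteq> g a" "b < a"
  shows "\<exists>x. b < x \<and> x < a \<and> f x \<noteq> g x"
proof -
  have "((\<lambda>x. f x - g x) \<longlongrightarrow> f a - g a) (at a)"
    using assms(1,2) unfolding isCont_def by (rule tendsto_diff)
  then have "eventually (\<lambda>x. f x \<noteq> g x) (at a)"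
    by (rule tendsto_imp_eventually_ne[THEN eventually_mono]) (use assms(3) in auto)
  then have "eventually (\<lambda>x. f x \<noteq> g x) (at_left a)"
    by (rule eventually_at_split[THEN iffD1, THEN conjunct1])
  moreover have "eventually (\<lambda>x. b < x \<and> x < a) (at_left a)"
    using eventually_at_left_real[OF assms(4)] by simp
  ultimately have "eventually (\<lambda>x. b < x \<and> x < a \<and> f x \<noteq> g x) (at_left a)"
    by eventually_elim auto
  then show ?thesis
    using eventually_happens'[OF trivial_limit_at_left_real] by blast
qed

lemma pmf_Pi_bernoulli_indicator:
  assumes "0 \<le> p" "p \<le> 1" "B \<subseteq> {..<n}"
  shows "pmf (Pi_pmf {..<n} False (\<lambda>_. bernoulli_pmf (1 - p))) (\<lambda>i. i \<in> B)
           = (1 - p) ^ card B * p ^ (n - card B)"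
proof -
  have "pmf (Pi_pmf {..<n} False (\<lambda>_. bernoulli_pmf (1 - p))) (\<lambda>i. i \<in> B)
          = (\<Prod>i<n. if i \<in> B then 1 - p else p)"
    using assms by (subst pmf_Pi) (auto intro!: prod.cong)
  also have "\<dots> = (1 - p) ^ card ({..<n} \<inter> B) * p ^ card ({..<n} - B)"
    by (simp add: prod.If_cases Diff_eq)
  also have "card ({..<n} - B) = n - card B"
    using assms(3) by (simp add: card_Diff_subset finite_subset)
  finally show ?thesis
    using assms(3) by (simp add: Int_absorb1)
qed

lemma pmf_map_Pi_bernoulli:
  assumes "0 \<le> p" "p \<le> 1"
  shows "pmf (map_pmf g (Pi_pmf {..<n} False (\<lambda>_. bernoulli_pmf (1 - p)))) v
           = (\<Sum>B | B \<subseteq> {..<n} \<and> g (\<lambda>i. i \<in> B) = v. (1 - p) ^ card B * p ^ (n - card B))"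
proof -
  define M where "M = Pi_pmf {..<n} False (\<lambda>_. bernoulli_pmf (1 - p))"
  define E where "E = PiE_dflt {..<n} False (\<lambda>_. UNIV :: bool set)"
  have "set_pmf M \<subseteq> E"
    unfolding M_def E_def using set_Pi_pmf_subset[of "{..<n}" False] by (auto simp: PiE_dflt_def)
  have "pmf (map_pmf g M) v = measure M (g -` {v} \<inter> E)"
    unfolding pmf_map using \<open>set_pmf M \<subseteq> E\<close>
    by (intro measure_prob_cong_0) (auto simp: set_pmf_eq)
  also have "\<dots> = sum (pmf M) (g -` {v} \<inter> E)"
    using finite_PiE_dflt[of "{..<n}" "\<lambda>_. UNIV :: bool set"]
    by (intro measure_measure_pmf_finite) (simp add: E_def)
  also have "\<dots> = (\<Sum>B | B \<subseteq> {..<n} \<and> g (\<lambda>i. i \<in> B) = v. pmf M (\<lambda>i. i \<in> B))"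
    by (rule sum.reindex_bij_betw[symmetric], rule bij_betwI[of _ _ _ "\<lambda>b. {i. b i}"])
       (auto simp: E_def PiE_dflt_def)
  also have "\<dots> = (\<Sum>B | B \<subseteq> {..<n} \<and> g (\<lambda>i. i \<in> B) = v. (1 - p) ^ card B * p ^ (n - card B))"
    unfolding M_def using assms by (intro sum.cong refl pmf_Pi_bernoulli_indicator) auto
  finally show ?thesis
    unfolding M_def .
qed

definition mset_at :: "'a list \<Rightarrow> nat set \<Rightarrow> 'a multiset" where
  "mset_at xs B = mset (map (\<lambda>i. xs ! i) (filter (\<lambda>i. i \<in> B) [0..<length xs]))"

lemma mset_at_empty [simp]: "mset_at xs {} = {#}"
  by (simp add: mset_at_def)

lemma mset_at_singleton:
  assumes "i < length xs"
  shows "mset_at xs {i} = {#xs ! i#}"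
proof -
  have "filter (\<lambda>j. j \<in> {i}) [0..<n] = (if i < n then [i] else [])" for n
    by (induction n) auto
  then show ?thesis
    using assms by (simp add: mset_at_def)
qed

lemma card_pos_if_ms_mean_mset_at:
  assumes "ms_mean (mset_at xs B) = v" "v \<noteq> 0" "B \<subseteq> {..<length xs}"
  shows "0 < card B"
proof -
  have "B \<noteq> {}"
    using assms(1,2) by (auto simp: ms_mean_def)
  then show ?thesis
    using assms(3) by (simp add: card_gt_0_iff finite_subset)
qed

definition mean_prob_cofactor :: "'a::real_vector \<Rightarrow> 'a list \<Rightarrow> real \<Rightarrow> real" where
  "mean_prob_cofactor v xs p =
     (\<Sum>B | B \<subseteq> {..<length xs} \<and> ms_mean (mset_at xs B) = v.
        (1 - p) ^ (card B - 1) * p ^ (length xs - card B))"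

lemma isCont_mean_prob_cofactor: "isCont (mean_prob_cofactor v xs) p"
  unfolding mean_prob_cofactor_def by (intro continuous_intros)

lemma pmf_ms_mean_retain_pmf_list:
  assumes "0 \<le> p" "p \<le> 1" "v \<noteq> 0"
  shows "pmf (map_pmf ms_mean (retain_pmf_list p xs)) v = (1 - p) * mean_prob_cofactor v xs p"
proof -
  have "pmf (map_pmf ms_mean (retain_pmf_list p xs)) v
          = (\<Sum>B | B \<subseteq> {..<length xs} \<and> ms_mean (mset_at xs B) = v.
               (1 - p) ^ card B * p ^ (length xs - card B))"
    unfolding retain_pmf_list_def map_pmf_comp using pmf_map_Pi_bernoulli[OF assms(1,2)]
    by (simp add: mset_at_def)
  also have "\<dots> = (\<Sum>B | B \<subseteq> {..<length xs} \<and> ms_mean (mset_at xs B) = v.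
                    (1 - p) * ((1 - p) ^ (card B - 1) * p ^ (length xs - card B)))"
  proof (intro sum.cong refl)
    fix B assume "B \<in> {B. B \<subseteq> {..<length xs} \<and> ms_mean (mset_at xs B) = v}"
    then have "card B = Suc (card B - 1)"
      using card_pos_if_ms_mean_mset_at assms(3) by fastforce
    then show "(1 - p) ^ card B * p ^ (length xs - card B)
                 = (1 - p) * ((1 - p) ^ (card B - 1) * p ^ (length xs - card B))"
      by (metis mult.assoc power_Suc)
  qed
  finally show ?thesis
    by (simp add: mean_prob_cofactor_def sum_distrib_left)
qed

lemma mean_prob_cofactor_at_one:
  assumes "v \<noteq> 0"
  shows "mean_prob_cofactor v xs 1 = count (mset xs) v"
proof -
  let ?S = "{B. B \<subseteq> {..<length xs} \<and> ms_mean (mset_at xs B) = v}"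
  have "finite ?S"
    by (rule finite_subset[of _ "Pow {..<length xs}"]) auto
  have "mean_prob_cofactor v xs 1 = (\<Sum>B\<in>?S. if card B = 1 then 1 else 0)"
    unfolding mean_prob_cofactor_def
  proof (intro sum.cong refl)
    fix B assume "B \<in> ?S"
    then have "0 < card B"
      using card_pos_if_ms_mean_mset_at assms by blast
    then show "(1 - 1) ^ (card B - 1) * 1 ^ (length xs - card B) = (if card B = 1 then 1 else 0::real)"
      by simp
  qed
  also have "\<dots> = card {B \<in> ?S. card B = 1}"
    using sum.inter_filter[OF \<open>finite ?S\<close>, of "\<lambda>_. 1::real" "\<lambda>B. card B = 1"] by simp
  also have "{B \<in> ?S. card B = 1} = (\<lambda>i. {i}) ` {i. i < length xs \<and> xs ! i = v}"
    by (auto simp: card_Suc_eq mset_at_singleton ms_mean_def)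
  also have "card \<dots> = card {i. i < length xs \<and> xs ! i = v}"
    by (rule card_image) (auto simp: inj_on_def)
  also have "\<dots> = count (mset xs) v"
    by (simp add: count_mset count_list_eq_length_filter length_filter_conv_card)
       (metis (no_types, lifting))
  finally show ?thesis
    by simp
qed

theorem lemma1:
  fixes S1 S2 :: "(real ^ 'm) multiset"
  assumes "S1 \<noteq> S2"
    and "S1 \<noteq> {#}" and "S2 \<noteq> {#}"
    and "size S1 = size S2"
  shows "\<exists>p::real. 0 < p \<and> p < 1 \<and> drop_mean_pmf p S1 \<noteq> drop_mean_pmf p S2"
proof -
  obtain v where "v \<noteq> 0" and count_neq: "count S1 v \<noteq> count S2 v"
    using multiset_eqI_size_count_except[OF assms(4)] assms(1) by blast
  define xs1 where "xs1 = (SOME xs. mset xs = S1)"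
  define xs2 where "xs2 = (SOME xs. mset xs = S2)"
  have "mset xs1 = S1" "mset xs2 = S2"
    unfolding xs1_def xs2_def by (simp_all add: someI_ex[OF ex_mset])
  then have "mean_prob_cofactor v xs1 1 \<noteq> mean_prob_cofactor v xs2 1"
    using count_neq by (simp add: mean_prob_cofactor_at_one[OF \<open>v \<noteq> 0\<close>])
  then obtain p where p: "0 < p" "p < 1"
    and "mean_prob_cofactor v xs1 p \<noteq> mean_prob_cofactor v xs2 p"
    using exists_left_of_neq_continuous[OF isCont_mean_prob_cofactor isCont_mean_prob_cofactor]
    by (metis zero_less_one)
  then have "pmf (drop_mean_pmf p S1) v \<noteq> pmf (drop_mean_pmf p S2) v"
    using pmf_ms_mean_retain_pmf_list[of p v] \<open>v \<noteq> 0\<close>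
    by (simp add: drop_mean_pmf_def retain_pmf_def xs1_def xs2_def)
  then show ?thesis
    using p by metis
qed

end
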